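(* Let $\rho\in\mathrm{Rect}^\ast(n)$ with $\rho\notin\mathcal B_n$ (a genuine rear ear), and let $\sigma\in\mathrm{Rect}^\ast(n)$ with $d_{\mathrm{sup}}(\rho,\sigma)<\infty$. Then every support corridor between $\rho$ and $\sigma$ starts (at its end in $A(\rho)$) at a vertex whose local simplex dimension in $G_n$ is at least $3$.
   Context: The partition graph $G_n$ has as vertices the integer partitions of $n$; two partitions are adjacent if one is obtained from the other by a single elementary unit transfer followed by reordering: decrease one part by $1$ and either increase a different part by $1$ or create a new part equal to $1$, then delete a part that became $0$ and sort in nonincreasing order (the result being different from the original). $\mathrm{Rect}^\ast(n)=\{(a^b):ab=n,\ a,b\ge2\}$, where $(a^b)$ has $b$ parts equal to $a$. The boundary framework is $\mathcal B_n=\mathcal M_n\cup\mathcal L_n\cup\mathcal R_n$ with $\mathcal M_n=\{(n-k,1^k):0\le k\le n-1\}$, $\mathcal L_n=\{(n-k,k):1\le k\le\lfloor n/2\rfloor\}$, and $\mathcal R_n$ the set of conjugates of elements of $\mathcal L_n$. For $\rho=(a^b)\in\mathrm{Rect}^\ast(n)$ the attachment pair is $A(\rho)=\{(a+1,a^{\,b-2},a-1),\ (a^{\,b-1},a-1,1)\}$ (with $(a+1,a-1)$ as the first element when $b=2$). The support distance $d_{\mathrm{sup}}(\rho,\sigma)$ is the minimum of the graph distances in $G_n\setminus\mathrm{Rect}^\ast(n)$ between a vertex of $A(\rho)$ and a vertex of $A(\sigma)$ ($\infty$ if no such path exists). A support corridor between $\rho$ and $\sigma$ is a shortest path in $G_n\setminus\mathrm{Rect}^\ast(n)$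 joining some vertex of $A(\rho)$ to some vertex of $A(\sigma)$ (of length $d_{\mathrm{sup}}(\rho,\sigma)$). The local simplex dimension of a vertex $v$ is $m-1$ where $m$ is the largest size of a clique of $G_n$ containing $v$. *)

theory Defs
  imports Main "HOL-Library.Extended_Nat"
begin

definition partitions :: "nat \<Rightarrow> nat list set" where
  "partitions n = {p. sorted_wrt (\<ge>) p \<and> 0 \<notin> set p \<and> sum_list p = n}"

definition normalize :: "nat list \<Rightarrow> nat list" where
  "normalize xs = rev (sort (filter (\<lambda>x. x \<noteq> 0) xs))"

definition unit_transfer :: "nat list \<Rightarrow> nat list \<Rightarrow> bool" where
  "unit_transfer p q \<longleftrightarrow> q \<noteq> p \<and>
     (\<exists>i < length p. 1 \<le> p ! i \<and>
        ((\<exists>j < length p. j \<noteq> i \<and> q = normalize ((p[i := p ! i - 1])[j := p ! j + 1]))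
         \<or> q = normalize (p[i := p ! i - 1] @ [1])))"

definition adj :: "nat \<Rightarrow> nat list \<Rightarrow> nat list \<Rightarrow> bool" where
  "adj n p q \<longleftrightarrow> p \<in> partitions n \<and> q \<in> partitions n \<and> (unit_transfer p q \<or> unit_transfer q p)"

definition Rect :: "nat \<Rightarrow> nat list set" where
  "Rect n = {replicate b a | a b. a * b = n \<and> 2 \<le> a \<and> 2 \<le> b}"

definition conj :: "nat list \<Rightarrow> nat list" where
  "conj p = map (\<lambda>i. length (filter (\<lambda>x. i < x) p)) [0..<(if p = [] then 0 else hd p)]"

definition Mset :: "nat \<Rightarrow> nat list set" where
  "Mset n = {(n - k) # replicate k 1 | k. k \<le> n - 1}"

definition Lset :: "nat \<Rightarrow> nat list set" where
  "Lset n = {[n - k, k] | k. 1 \<le> k \<and> k \<le> n div 2}"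

definition Rset :: "nat \<Rightarrow> nat list set" where
  "Rset n = conj ` Lset n"

definition Bframe :: "nat \<Rightarrow> nat list set" where
  "Bframe n = Mset n \<union> Lset n \<union> Rset n"

definition attach :: "nat list \<Rightarrow> nat list set" where
  "attach rho = (let a = hd rho; b = length rho in
     {[a + 1] @ replicate (b - 2) a @ [a - 1], replicate (b - 1) a @ [a - 1, 1]})"

definition avoid_path :: "nat \<Rightarrow> nat list list \<Rightarrow> bool" where
  "avoid_path n xs \<longleftrightarrow> xs \<noteq> [] \<and> set xs \<subseteq> partitions n - Rect n \<and> successively (adj n) xs"

text \<open>Support distance (\<infinity> if no path exists).\<close>
definition dsup :: "nat \<Rightarrow> nat list \<Rightarrow> nat list \<Rightarrow> enat" where
  "dsup n rho sigma = (INF xs \<in> {xs. avoid_path n xs \<and> hd xs \<in> attach rho \<and> last xs \<in> attach sigma}.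
                          enat (length xs - 1))"

definition support_corridor :: "nat \<Rightarrow> nat list \<Rightarrow> nat list \<Rightarrow> nat list list \<Rightarrow> bool" where
  "support_corridor n rho sigma xs \<longleftrightarrow> avoid_path n xs \<and> hd xs \<in> attach rho \<and> last xs \<in> attach sigma
     \<and> enat (length xs - 1) = dsup n rho sigma"

definition clique :: "nat \<Rightarrow> nat list set \<Rightarrow> bool" where
  "clique n S \<longleftrightarrow> finite S \<and> S \<subseteq> partitions n \<and> (\<forall>x\<in>S. \<forall>y\<in>S. x \<noteq> y \<longrightarrow> adj n x y)"

definition local_simplex_dim :: "nat \<Rightarrow> nat list \<Rightarrow> nat" where
  "local_simplex_dim n v = Max {card S | S. clique n S \<and> v \<in> S} - 1"

end

theory Submission
  imports Defs "HOL-Library.Multiset"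
begin

(* A rectangle (a^b) outside the boundary framework has a, b >= 3.  Both vertices of its
   attachment pair then lie in explicit 4-cliques of G_n: next to (a+1, a^(b-2), a-1) and
   (a^(b-1), a-1, 1) there is room for one more unit transfer out of the top row or out of the
   row a-1, and all pairs of the resulting partitions differ by a single unit transfer.
   A support corridor starts in A(rho). *)

lemma normalize_eq_partition:
  assumes "q \<in> partitions n" and "mset q = mset (filter (\<lambda>x. x \<noteq> 0) xs)"
  shows "normalize xs = q"
proof -
  have "sorted (rev q)" using assms(1) by (simp add: partitions_def sorted_wrt_rev)
  then have "sort (filter (\<lambda>x. x \<noteq> 0) xs) = rev q"
    by (intro properties_for_sort) (use assms(2) in auto)
  then show ?thesis unfolding normalize_def by simp
qed

lemma adj_move_unit:
  fixes C :: "nat multiset"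
  assumes p: "p \<in> partitions n" and q: "q \<in> partitions n" and "2 \<le> x" and "x \<noteq> y + 1"
    and mp: "mset p = C + {#x, y#}" and mq: "mset q = C + {#x - 1, y + 1#}"
  shows "adj n p q"
proof -
  have "q \<noteq> p"
  proof
    assume "q = p"
    then have "count (mset q) x = count (mset p) x" by simp
    then show False using mp mq assms(3,4) by (auto split: if_splits)
  qed
  have "x \<in> set p" using mp by (simp flip: set_mset_mset)
  then obtain i where i: "i < length p" "p ! i = x" by (metis in_set_conv_nth)
  have "mset (p[i := 0]) = add_mset 0 (C + {#y#})" using mset_update[OF i(1), of 0] i mp by simp
  then have "y \<in> set (p[i := 0])" by (simp flip: set_mset_mset)
  then obtain j where j: "j < length p" "p[i := 0] ! j = y" by (metis in_set_conv_nth length_list_update)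
  have nz: "0 \<notin> set p" using p by (simp add: partitions_def)
  moreover have "y \<in> set p" using mp by (simp flip: set_mset_mset)
  ultimately have "y \<noteq> 0" by metis
  then have ji: "j \<noteq> i" using j i by auto
  then have pj: "p ! j = y" using j by simp
  let ?r = "(p[i := x - 1])[j := y + 1]"
  have "0 \<notin> set ?r"
    using set_update_subset_insert[of p i "x - 1"] set_update_subset_insert[of "p[i := x - 1]" j "y + 1"]
      nz assms(3) by auto
  moreover have "mset ?r = C + {#x - 1, y + 1#}"
    using mset_update[of j "p[i := x - 1]"] mset_update[OF i(1), of "x - 1"] i j ji pj mp by simp
  moreover have "filter (\<lambda>x. x \<noteq> 0) ?r = ?r" using \<open>0 \<notin> set ?r\<close> by (metis (mono_tags) filter_id_conv)
  ultimately have "normalize ?r = q" by (intro normalize_eq_partition[OF q]) (simp add: mq)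
  then have "unit_transfer p q" unfolding unit_transfer_def using \<open>q \<noteq> p\<close> i j ji pj assms(3) by auto
  then show ?thesis using p q by (simp add: adj_def)
qed

lemma adj_split_off_unit:
  fixes C :: "nat multiset"
  assumes p: "p \<in> partitions n" and q: "q \<in> partitions n" and "2 \<le> x"
    and mp: "mset p = C + {#x#}" and mq: "mset q = C + {#x - 1, 1#}"
  shows "adj n p q"
proof -
  have "size (mset q) \<noteq> size (mset p)" using mp mq by simp
  then have "q \<noteq> p" by blast
  have "x \<in> set p" using mp by (simp flip: set_mset_mset)
  then obtain i where i: "i < length p" "p ! i = x" by (metis in_set_conv_nth)
  have nz: "0 \<notin> set p" using p by (simp add: partitions_def)
  let ?r = "p[i := x - 1] @ [1]"
  have "0 \<notin> set ?r" using set_update_subset_insert[of p i "x - 1"] nz assms(3) by auto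
  moreover have "mset ?r = C + {#x - 1, 1#}" using mset_update[OF i(1), of "x - 1"] i mp by simp
  moreover have "filter (\<lambda>x. x \<noteq> 0) ?r = ?r" using \<open>0 \<notin> set ?r\<close> by (metis (mono_tags) filter_id_conv)
  ultimately have "normalize ?r = q" by (intro normalize_eq_partition[OF q]) (simp add: mq)
  then have "unit_transfer p q" unfolding unit_transfer_def using \<open>q \<noteq> p\<close> i assms(3) by auto
  then show ?thesis using p q by (simp add: adj_def)
qed

lemma sorted_wrt_replicate: "R x x \<Longrightarrow> sorted_wrt R (replicate k x)"
  by (induction k) auto

lemma length_le_sum_list: "0 \<notin> set xs \<Longrightarrow> length xs \<le> sum_list (xs :: nat list)"
  by (induction xs) auto

lemma finite_partitions: "finite (partitions n)"
proof -
  have "partitions n \<subseteq> {xs. set xs \<subseteq> {0..n} \<and> length xs \<le> n}"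
    using length_le_sum_list member_le_sum_list by (fastforce simp: partitions_def)
  then show ?thesis using finite_lists_length_le[of "{0..n}" n] finite_subset by blast
qed

lemma local_simplex_dim_ge:
  assumes "clique n S" and "v \<in> S"
  shows "card S - 1 \<le> local_simplex_dim n v"
proof -
  let ?sizes = "{card S | S. clique n S \<and> v \<in> S}"
  have "?sizes \<subseteq> {..card (partitions n)}"
    using finite_partitions by (auto simp: clique_def intro: card_mono)
  then have "finite ?sizes" using finite_subset by blast
  moreover have "card S \<in> ?sizes" using assms by auto
  ultimately have "card S \<le> Max ?sizes" by (rule Max_ge)
  then show ?thesis unfolding local_simplex_dim_def by simp
qed

lemma clique_of_pairwise_adj4:
  assumes "adj n p q" "adj n p r" "adj n p s" "adj n q r" "adj n q s" "adj n r s"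
  shows "clique n {p, q, r, s}"
  using assms unfolding clique_def adj_def by auto

lemma conj_replicate:
  assumes "0 < k"
  shows "conj (replicate k c) = replicate c k"
proof -
  have "conj (replicate k c) = map (\<lambda>i. k) [0..<c]"
    unfolding conj_def using assms by (intro map_cong) (auto simp: filter_replicate)
  then show ?thesis by (simp add: map_replicate_const)
qed

lemma Rect_outside_Bframe:
  assumes "rho \<in> Rect n" and "rho \<notin> Bframe n"
  obtains a b where "rho = replicate b a" and "n = a * b" and "3 \<le> a" and "3 \<le> b"
proof -
  obtain a b where ab: "rho = replicate b a" "a * b = n" "2 \<le> a" "2 \<le> b"
    using assms(1) by (auto simp: Rect_def)
  have "b \<noteq> 2"
  proof
    assume "b = 2"
    then have "rho = [a, a]" and "n = 2 * a" using ab by (auto simp: numeral_2_eq_2)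
    then have "rho \<in> Lset n" unfolding Lset_def using ab by (intro CollectI exI[of _ a]) auto
    then show False using assms(2) by (simp add: Bframe_def)
  qed
  moreover have "a \<noteq> 2"
  proof
    assume "a = 2"
    have "[b, b] \<in> Lset n" using ab \<open>a = 2\<close> unfolding Lset_def by auto
    moreover have "conj [b, b] = rho"
      using conj_replicate[of 2 b] ab \<open>a = 2\<close> by (simp add: numeral_2_eq_2)
    ultimately have "rho \<in> Rset n" unfolding Rset_def by force
    then show False using assms(2) by (simp add: Bframe_def)
  qed
  ultimately show ?thesis using ab that by simp
qed

locale thick_rectangle =
  fixes a b :: nat
  assumes three_le_a: "3 \<le> a" and three_le_b: "3 \<le> b"
begin

definition "attach_fst = (a + 1) # replicate (b - 2) a @ [a - 1]"
definition "attach_snd = replicate (b - 1) a @ [a - 1, 1]"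
definition "shared_vertex = (a + 1) # replicate (b - 3) a @ [a - 1, a - 1, 1]"
definition "fst_partner = (a + 1) # replicate (b - 2) a @ [a - 2, 1]"
definition "snd_partner_two = replicate (b - 2) a @ [a - 1, a - 1, 2]"
definition "snd_partner_ones = replicate (b - 2) a @ [a - 1, a - 1, 1, 1]"

lemma attach_rectangle: "attach (replicate b a) = {attach_fst, attach_snd}"
  using three_le_b by (simp add: attach_def attach_fst_def attach_snd_def)

lemmas near_rectangle_defs = attach_fst_def attach_snd_def shared_vertex_def fst_partner_def
  snd_partner_two_def snd_partner_ones_def

lemma b_diff_eq_Suc: "b - Suc 0 = Suc (b - 2)" "b - 2 = Suc (b - 3)"
  using three_le_b by simp_all

lemma partitions_near_rectangle:
  "attach_fst \<in> partitions (a * b)" "attach_snd \<in> partitions (a * b)"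
  "shared_vertex \<in> partitions (a * b)" "fst_partner \<in> partitions (a * b)"
  "snd_partner_two \<in> partitions (a * b)" "snd_partner_ones \<in> partitions (a * b)"
  using le_Suc_ex[OF three_le_a] le_Suc_ex[OF three_le_b]
  unfolding near_rectangle_defs partitions_def
  by (auto simp: sorted_wrt_append sorted_wrt_replicate sum_list_replicate algebra_simps)

lemma adj_attach_snd_shared_vertex: "adj (a * b) attach_snd shared_vertex"
  by (rule adj_move_unit[OF partitions_near_rectangle(2,3), where x = a and y = a
        and C = "{#a - 1, 1#} + replicate_mset (b - 3) a"])
    (use three_le_a in \<open>simp_all add: near_rectangle_defs b_diff_eq_Suc add_mset_commute\<close>)

lemma clique_at_attach_fst: "clique (a * b) {attach_fst, attach_snd, shared_vertex, fst_partner}"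
proof (rule clique_of_pairwise_adj4)
  show "adj (a * b) attach_fst attach_snd"
    by (rule adj_split_off_unit[OF partitions_near_rectangle(1,2), where x = "a + 1"
          and C = "add_mset (a - 1) (replicate_mset (b - 2) a)"])
      (use three_le_a in \<open>simp_all add: near_rectangle_defs b_diff_eq_Suc add_mset_commute\<close>)
  show "adj (a * b) attach_fst shared_vertex"
    by (rule adj_split_off_unit[OF partitions_near_rectangle(1,3), where x = a
          and C = "{#a + 1, a - 1#} + replicate_mset (b - 3) a"])
      (use three_le_a in \<open>simp_all add: near_rectangle_defs b_diff_eq_Suc add_mset_commute\<close>)
  show "adj (a * b) attach_fst fst_partner"
    by (rule adj_split_off_unit[OF partitions_near_rectangle(1,4), where x = "a - 1"
          and C = "add_mset (a + 1) (replicate_mset (b - 2) a)"])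
      (use three_le_a in \<open>simp_all add: near_rectangle_defs b_diff_eq_Suc add_mset_commute\<close>)
  show "adj (a * b) attach_snd shared_vertex"
    by (rule adj_attach_snd_shared_vertex)
  show "adj (a * b) attach_snd fst_partner"
    by (rule adj_move_unit[OF partitions_near_rectangle(2,4), where x = "a - 1" and y = a
          and C = "add_mset 1 (replicate_mset (b - 2) a)"])
      (use three_le_a in \<open>simp_all add: near_rectangle_defs b_diff_eq_Suc add_mset_commute\<close>)
  show "adj (a * b) shared_vertex fst_partner"
    by (rule adj_move_unit[OF partitions_near_rectangle(3,4), where x = "a - 1" and y = "a - 1"
          and C = "{#a + 1, 1#} + replicate_mset (b - 3) a"])
      (use three_le_a in \<open>simp_all add: near_rectangle_defs b_diff_eq_Suc add_mset_commute\<close>)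
qed

lemma clique_at_attach_snd:
  "clique (a * b) {attach_snd, shared_vertex, snd_partner_two, snd_partner_ones}"
proof (rule clique_of_pairwise_adj4)
  show "adj (a * b) attach_snd shared_vertex"
    by (rule adj_attach_snd_shared_vertex)
  show "adj (a * b) attach_snd snd_partner_two"
    by (rule adj_move_unit[OF partitions_near_rectangle(2,5), where x = a and y = 1
          and C = "add_mset (a - 1) (replicate_mset (b - 2) a)"])
      (use three_le_a in \<open>simp_all add: near_rectangle_defs b_diff_eq_Suc add_mset_commute\<close>)
  show "adj (a * b) attach_snd snd_partner_ones"
    by (rule adj_split_off_unit[OF partitions_near_rectangle(2,6), where x = a
          and C = "{#a - 1, 1#} + replicate_mset (b - 2) a"])
      (use three_le_a in \<open>simp_all add: near_rectangle_defs b_diff_eq_Suc add_mset_commute\<close>)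
  show "adj (a * b) shared_vertex snd_partner_two"
    by (rule adj_move_unit[OF partitions_near_rectangle(3,5), where x = "a + 1" and y = 1
          and C = "{#a - 1, a - 1#} + replicate_mset (b - 3) a"])
      (use three_le_a in \<open>simp_all add: near_rectangle_defs b_diff_eq_Suc add_mset_commute\<close>)
  show "adj (a * b) shared_vertex snd_partner_ones"
    by (rule adj_split_off_unit[OF partitions_near_rectangle(3,6), where x = "a + 1"
          and C = "{#a - 1, a - 1, 1#} + replicate_mset (b - 3) a"])
      (use three_le_a in \<open>simp_all add: near_rectangle_defs b_diff_eq_Suc add_mset_commute\<close>)
  show "adj (a * b) snd_partner_two snd_partner_ones"
    by (rule adj_split_off_unit[OF partitions_near_rectangle(5,6), where x = 2
          and C = "{#a - 1, a - 1#} + replicate_mset (b - 2) a"])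
      (use three_le_a in \<open>simp_all add: near_rectangle_defs b_diff_eq_Suc add_mset_commute\<close>)
qed

lemma near_rectangle_distinct:
  "attach_fst \<noteq> attach_snd" "attach_fst \<noteq> shared_vertex" "attach_fst \<noteq> fst_partner"
  "attach_snd \<noteq> shared_vertex" "attach_snd \<noteq> fst_partner" "shared_vertex \<noteq> fst_partner"
  "attach_snd \<noteq> snd_partner_two" "attach_snd \<noteq> snd_partner_ones"
  "shared_vertex \<noteq> snd_partner_two" "shared_vertex \<noteq> snd_partner_ones"
  "snd_partner_two \<noteq> snd_partner_ones"
  unfolding near_rectangle_defs using three_le_a
  by (auto simp: b_diff_eq_Suc dest!: arg_cong[where f = "\<lambda>l. (length l, hd l, count (mset l) (a - 1))"])

lemma attach_in_4clique:
  assumes "v \<in> attach (replicate b a)"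
  obtains S where "clique (a * b) S" and "v \<in> S" and "card S = 4"
proof -
  have "card {attach_fst, attach_snd, shared_vertex, fst_partner} = 4"
    and "card {attach_snd, shared_vertex, snd_partner_two, snd_partner_ones} = 4"
    using near_rectangle_distinct by simp_all
  moreover have "v = attach_fst \<or> v = attach_snd" using assms attach_rectangle by simp
  ultimately show ?thesis using that clique_at_attach_fst clique_at_attach_snd by blast
qed

end

theorem corollary4p8:
  fixes n :: nat and rho sigma :: "nat list" and xs :: "nat list list"
  assumes "rho \<in> Rect n" and "rho \<notin> Bframe n"
    and "sigma \<in> Rect n" and "dsup n rho sigma < \<infinity>"
    and "support_corridor n rho sigma xs"
  shows "3 \<le> local_simplex_dim n (hd xs)"
proof -
  obtain a b where rho: "rho = replicate b a" and n: "n = a * b" and "3 \<le> a" "3 \<le> b"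
    using Rect_outside_Bframe[OF assms(1,2)] .
  then interpret thick_rectangle a b by unfold_locales
  have "hd xs \<in> attach (replicate b a)" using assms(5) rho by (simp add: support_corridor_def)
  then obtain S where "clique n S" "hd xs \<in> S" "card S = 4"
    unfolding n by (rule attach_in_4clique)
  then show ?thesis using local_simplex_dim_ge by fastforce
qed

end
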